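(* Equip $V^{5,2}=\mathrm{SO}(5)/\mathrm{SO}(3)$ with the Sasakian structure $\eta=X^1$, $g=y_1Q|_{\mathfrak m_1}+y_2Q|_{\mathfrak m_2}+y_3Q|_{\mathfrak m_3}$ with $y_1=4y_2^2$, $y_2=y_3>0$. Then the $\mathrm{SO}(5)$-invariant connection on the homogeneous bundle $P_1=\mathrm{SO}(5)\times_{\mathrm{id}}\mathrm{SO}(3)$ corresponding to $\alpha=e^8\otimes e_8+e^9\otimes e_9+e^{10}\otimes e_{10}$ is a self-dual contact instanton, i.e. its curvature satisfies $\ast(F_\alpha\wedge\eta\wedge\omega)=F_\alpha$ with $\omega=\frac12d\eta$.
   Context: Basis of $\mathfrak{so}(5)$ (with $E_{ij}$ the elementary $5\times5$ matrices): $e_1=E_{12}-E_{21}$, $e_2=E_{13}-E_{31}$, $e_3=E_{14}-E_{41}$, $e_4=E_{15}-E_{51}$, $e_5=E_{23}-E_{32}$, $e_6=E_{24}-E_{42}$, $e_7=E_{25}-E_{52}$, $e_8=E_{34}-E_{43}$, $e_9=E_{35}-E_{53}$, $e_{10}=E_{54}-E_{45}$; bracket = commutator; $e^i$ dual basis. $\mathrm{SO}(3)$ has Lie algebra $\mathrm{span}\{e_8,e_9,e_{10}\}$; $\mathfrak m=\mathrm{span}\{e_1,\dots,e_7\}$ identified with the tangent space of $V^{5,2}$ at the origin. $Q(A,B)=\frac12\mathrm{tr}(AB^T)$, $\mathfrak m_1=\mathrm{span}\{e_1\}$, $\mathfrak m_2=\mathrm{span}\{e_2,e_3,e_4\}$,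 $\mathfrak m_3=\mathrm{span}\{e_5,e_6,e_7\}$. Orthonormal basis $X_1=e_1/\sqrt{y_1}$, $X_i=e_i/\sqrt{y_2}$ ($i=2,\dots,7$), dual $X^i$; $\omega=X^{25}+X^{36}+X^{47}$. Invariant connections on $G\times_\phi K\to G/H$ correspond to linear maps $\alpha:\mathfrak g\to\mathfrak k$ with $\alpha|_{\mathfrak h}=\phi_*$ and $\mathrm{Ad}(H)$-equivariance; the curvature on $\mathfrak m$ is $F(X,Y)=[\alpha X,\alpha Y]-\alpha([X,Y])$. $\ast$ is the Hodge star of $g$ with the orientation for which the self-dual contact 2-forms $X^{23}+X^{56}$, $X^{24}+X^{57}$, $X^{34}+X^{67}$, etc. satisfy $\ast(\eta\wedge\omega\wedge w)=w$. *)

theory Defs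
  imports "HOL-Analysis.Analysis"
begin

type_synonym mat5 = "nat \<Rightarrow> nat \<Rightarrow> real"

definition Emat :: "nat \<Rightarrow> nat \<Rightarrow> mat5" where
  "Emat i j = (\<lambda>a b. if a = i \<and> b = j then 1 else 0)"

definition madd :: "mat5 \<Rightarrow> mat5 \<Rightarrow> mat5" where
  "madd A B = (\<lambda>a b. A a b + B a b)"

definition msub :: "mat5 \<Rightarrow> mat5 \<Rightarrow> mat5" where
  "msub A B = (\<lambda>a b. A a b - B a b)"

definition mscale :: "real \<Rightarrow> mat5 \<Rightarrow> mat5" where
  "mscale c A = (\<lambda>a b. c * A a b)"

definition mmult :: "mat5 \<Rightarrow> mat5 \<Rightarrow> mat5" where
  "mmult A B = (\<lambda>a c. \<Sum>b\<in>{1..5}. A a b * B b c)"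

definition brk :: "mat5 \<Rightarrow> mat5 \<Rightarrow> mat5" where
  "brk A B = msub (mmult A B) (mmult B A)"

definition ebasis :: "nat \<Rightarrow> mat5" where
  "ebasis k =
    (if k = 1 then msub (Emat 1 2) (Emat 2 1)
     else if k = 2 then msub (Emat 1 3) (Emat 3 1)
     else if k = 3 then msub (Emat 1 4) (Emat 4 1)
     else if k = 4 then msub (Emat 1 5) (Emat 5 1)
     else if k = 5 then msub (Emat 2 3) (Emat 3 2)
     else if k = 6 then msub (Emat 2 4) (Emat 4 2)
     else if k = 7 then msub (Emat 2 5) (Emat 5 2)
     else if k = 8 then msub (Emat 3 4) (Emat 4 3)
     else if k = 9 then msub (Emat 3 5) (Emat 5 3)
     else if k = 10 then msub (Emat 5 4) (Emat 4 5)
     else (\<lambda>a b. 0))"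

definition Qform :: "mat5 \<Rightarrow> mat5 \<Rightarrow> real" where
  "Qform A B = (1/2) * (\<Sum>a\<in>{1..5}. \<Sum>b\<in>{1..5}. A a b * B a b)"

text \<open>Dual basis e^i. The e_i are Q-orthonormal, so e^i(A) = Q(A, e_i) for A in so(5).\<close>
definition edual :: "nat \<Rightarrow> mat5 \<Rightarrow> real" where
  "edual i A = Qform A (ebasis i)"

definition alpha :: "mat5 \<Rightarrow> mat5" where
  "alpha A = madd (mscale (edual 8 A) (ebasis 8))
               (madd (mscale (edual 9 A) (ebasis 9)) (mscale (edual 10 A) (ebasis 10)))"

definition curv :: "mat5 \<Rightarrow> mat5 \<Rightarrow> mat5" where
  "curv X Y = msub (brk (alpha X) (alpha Y)) (alpha (brk X Y))"

text \<open>Metric parameter attached to e_i: y1 on m1, y2 on m2, y3 on m3.\<close>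
definition yval :: "real \<Rightarrow> real \<Rightarrow> real \<Rightarrow> nat \<Rightarrow> real" where
  "yval y1 y2 y3 i = (if i = 1 then y1 else if i \<in> {2,3,4} then y2 else y3)"

definition Xb :: "real \<Rightarrow> real \<Rightarrow> real \<Rightarrow> nat \<Rightarrow> mat5" where
  "Xb y1 y2 y3 i = mscale (1 / sqrt (yval y1 y2 y3 i)) (ebasis i)"

text \<open>A (real) form is given by its coefficients on the basis forms X^I,
  I an (increasingly ordered) subset of {1..7}.\<close>
type_synonym form = "nat set \<Rightarrow> real"

definition sgnp :: "nat set \<Rightarrow> nat set \<Rightarrow> real" where
  "sgnp I J = (-1) ^ card {(i, j). i \<in> I \<and> j \<in> J \<and> j < i}"

text \<open>Wedge product (forms are homogeneous, so summing over all I works):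
  X^I \<and> X^J = sgnp I J X^(I \<union> J) for disjoint I,J.\<close>
definition wedge :: "form \<Rightarrow> form \<Rightarrow> form" where
  "wedge \<phi> \<psi> = (\<lambda>K. \<Sum>I\<in>Pow K. sgnp I (K - I) * \<phi> I * \<psi> (K - I))"

text \<open>2-form with values B(X_i,X_j) on the frame.\<close>
definition form2 :: "(nat \<Rightarrow> nat \<Rightarrow> real) \<Rightarrow> form" where
  "form2 B = (\<lambda>I. if card I = 2 \<and> I \<subseteq> {1..7} then B (Min I) (Max I) else 0)"

text \<open>Hodge star of g (orthonormal frame X_i) with volume form X^1234567:
  * X^I = sgnp I I^c X^(I^c).\<close>
definition hodge :: "form \<Rightarrow> form" where
  "hodge \<phi> = (\<lambda>J. if J \<subseteq> {1..7} then sgnp ({1..7} - J) J * \<phi> ({1..7} - J) else 0)"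

definition eta :: form where
  "eta = (\<lambda>I. if I = {1} then 1 else 0)"

text \<open>eta as a linear functional on so(5) (m-component X^1, zero on the isotropy algebra).\<close>
definition eta_fun :: "real \<Rightarrow> mat5 \<Rightarrow> real" where
  "eta_fun y1 A = sqrt y1 * edual 1 A"

text \<open>omega = 1/2 d eta, with d eta(X,Y) = - eta([X,Y]) for invariant forms, X,Y in m.\<close>
definition omega :: "real \<Rightarrow> real \<Rightarrow> real \<Rightarrow> form" where
  "omega y1 y2 y3 = form2 (\<lambda>i j. - (1/2) * eta_fun y1 (brk (Xb y1 y2 y3 i) (Xb y1 y2 y3 j)))"

definition Fcomp :: "real \<Rightarrow> real \<Rightarrow> real \<Rightarrow> nat \<Rightarrow> form" where
  "Fcomp y1 y2 y3 c = form2 (\<lambda>i j. edual c (curv (Xb y1 y2 y3 i) (Xb y1 y2 y3 j)))"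

end

theory Submission
  imports Defs
begin

(* Since alpha vanishes on m and is the identity on so(3), the curvature on m is
   F(X, Y) = - [X, Y]_so(3).  With y3 = y2 its e_8, e_9, e_10 components are 1/y2, 1/y2, -1/y2
   times the contact forms X^23 + X^56, X^24 + X^57, X^34 + X^67, and y1 = 4 y2^2 is exactly what
   makes omega = X^25 + X^36 + X^47.  Both sides of the instanton equation are linear in F, so it
   remains to evaluate phi |-> *(phi /\ eta /\ omega) on six basis 2-forms: it interchanges X^ab
   and X^(a+3)(b+3), with sign +1 in each case. *)

definition basis_form :: "nat set \<Rightarrow> form" where
  "basis_form I = (\<lambda>K. if K = I then 1 else 0)"

lemma eta_eq_basis_form: "eta = basis_form {1}"
  unfolding eta_def basis_form_def by simp

lemma sgnp_eq_power_sum: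
  assumes "finite I" "finite J"
  shows "sgnp I J = (-1) ^ (\<Sum>i\<in>I. \<Sum>j\<in>J. if j < i then 1 else 0)"
proof -
  have "{(i, j). i \<in> I \<and> j \<in> J \<and> j < i} = Sigma I (\<lambda>i. {j\<in>J. j < i})" by auto
  then have "card {(i, j). i \<in> I \<and> j \<in> J \<and> j < i} = (\<Sum>i\<in>I. card {j\<in>J. j < i})"
    using assms by simp
  also have "\<dots> = (\<Sum>i\<in>I. \<Sum>j\<in>J. if j < i then 1 else 0)"
    using assms by (simp add: sum.inter_filter[symmetric])
  finally show ?thesis unfolding sgnp_def by simp
qed

lemma wedge_add_left: "wedge (\<lambda>K. \<phi> K + \<psi> K) \<theta> = (\<lambda>K. wedge \<phi> \<theta> K + wedge \<psi> \<theta> K)"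
  unfolding wedge_def by (simp add: algebra_simps sum.distrib)

lemma wedge_add_right: "wedge \<phi> (\<lambda>K. \<psi> K + \<theta> K) = (\<lambda>K. wedge \<phi> \<psi> K + wedge \<phi> \<theta> K)"
  unfolding wedge_def by (simp add: algebra_simps sum.distrib)

lemma wedge_scale_left: "wedge (\<lambda>K. c * \<phi> K) \<psi> = (\<lambda>K. c * wedge \<phi> \<psi> K)"
  unfolding wedge_def by (simp add: algebra_simps sum_distrib_left)

lemma hodge_add: "hodge (\<lambda>K. \<phi> K + \<psi> K) = (\<lambda>K. hodge \<phi> K + hodge \<psi> K)"
  unfolding hodge_def by (auto simp: algebra_simps)

lemma hodge_scale: "hodge (\<lambda>K. c * \<phi> K) = (\<lambda>K. c * hodge \<phi> K)"
  unfolding hodge_def by auto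

lemma hodge_uminus: "hodge (\<lambda>K. - \<phi> K) = (\<lambda>K. - hodge \<phi> K)"
  unfolding hodge_def by auto

lemma wedge_basis_form:
  assumes "finite I" "finite J"
  shows "wedge (basis_form I) (basis_form J) =
    (\<lambda>K. (if I \<inter> J = {} then sgnp I J else 0) * basis_form (I \<union> J) K)"
proof
  fix K
  have "wedge (basis_form I) (basis_form J) K =
      (\<Sum>P\<in>Pow K. if P = I then sgnp I (K - I) * basis_form J (K - I) else 0)"
    unfolding wedge_def basis_form_def by (rule sum.cong) auto
  also have "\<dots> = (if I \<subseteq> K \<and> K - I = J then sgnp I J else 0)"
  proof (cases "finite K")
    case False
    then have "\<not> (I \<subseteq> K \<and> K - I = J)" using assms by (metis Diff_partition finite_UnI)
    then show ?thesis using False by auto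
  qed (auto simp: basis_form_def)
  also have "\<dots> = (if I \<inter> J = {} then sgnp I J else 0) * basis_form (I \<union> J) K"
    unfolding basis_form_def by auto
  finally show "wedge (basis_form I) (basis_form J) K = \<dots>" .
qed

lemma hodge_basis_form:
  assumes "I \<subseteq> {1..7}"
  shows "hodge (basis_form I) = (\<lambda>J. sgnp I ({1..7} - I) * basis_form ({1..7} - I) J)"
proof
  fix J
  have "J \<subseteq> {1..7} \<and> {1..7} - J = I \<longleftrightarrow> J = {1..7} - I" using assms by auto
  then show "hodge (basis_form I) J = sgnp I ({1..7} - I) * basis_form ({1..7} - I) J"
    unfolding hodge_def basis_form_def by auto
qed

definition omega_std :: form where
  "omega_std = (\<lambda>K. basis_form {2,5} K + basis_form {3,6} K + basis_form {4,7} K)"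

lemma atLeastAtMost_Suc_0_5: "{Suc 0..5} = {Suc 0, 2, 3, 4, 5}" by auto

lemma atLeastAtMost_Suc_0_7: "{Suc 0..7} = {Suc 0, 2, 3, 4, 5, 6, 7}" by auto

lemma contact_star_basis_forms:
  "hodge (wedge (wedge (basis_form {2,3}) eta) omega_std) = basis_form {5,6}"
  "hodge (wedge (wedge (basis_form {5,6}) eta) omega_std) = basis_form {2,3}"
  "hodge (wedge (wedge (basis_form {2,4}) eta) omega_std) = basis_form {5,7}"
  "hodge (wedge (wedge (basis_form {5,7}) eta) omega_std) = basis_form {2,4}"
  "hodge (wedge (wedge (basis_form {3,4}) eta) omega_std) = basis_form {6,7}"
  "hodge (wedge (wedge (basis_form {6,7}) eta) omega_std) = basis_form {3,4}"
  by (simp_all add: eta_eq_basis_form omega_std_def wedge_add_right wedge_basis_form hodge_add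
      hodge_scale hodge_uminus hodge_basis_form sgnp_eq_power_sum atLeastAtMost_Suc_0_7 insert_Diff_if)

definition self_dual_form :: "nat \<Rightarrow> nat \<Rightarrow> form" where
  "self_dual_form a b = (\<lambda>K. basis_form {a, b} K + basis_form {a + 3, b + 3} K)"

lemma self_dual_form_self_dual:
  assumes "(a, b) \<in> {(2, 3), (2, 4), (3, 4)}"
  shows "hodge (wedge (wedge (\<lambda>K. k * self_dual_form a b K) eta) omega_std) =
    (\<lambda>K. k * self_dual_form a b K)"
  using assms unfolding self_dual_form_def
  by (auto simp: wedge_scale_left wedge_add_left hodge_scale hodge_add contact_star_basis_forms)

lemma card_2_eq_Min_Max:
  fixes I :: "nat set"
  assumes "card I = 2"
  shows "I = {Min I, Max I}" "Min I < Max I"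
proof -
  obtain a b where ab: "I = {a, b}" "a < b"
    using assms by (auto simp: card_2_iff) (metis insert_commute linorder_neqE_nat)
  then show "I = {Min I, Max I}" "Min I < Max I" by auto
qed

lemma form2_cong:
  assumes "\<And>i j. i \<in> {1..7} \<Longrightarrow> j \<in> {1..7} \<Longrightarrow> i < j \<Longrightarrow> B i j = B' i j"
  shows "form2 B = form2 B'"
proof
  fix I :: "nat set"
  show "form2 B I = form2 B' I"
  proof (cases "card I = 2 \<and> I \<subseteq> {1..7}")
    case True
    then have "Min I \<in> {1..7}" "Max I \<in> {1..7}" "Min I < Max I"
      using card_2_eq_Min_Max[of I] by auto
    then show ?thesis unfolding form2_def using True assms by simp
  qed (auto simp: form2_def)
qed

lemma form2_add: "form2 (\<lambda>i j. B i j + C i j) = (\<lambda>K. form2 B K + form2 C K)"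
  unfolding form2_def by auto

lemma form2_scale: "form2 (\<lambda>i j. c * B i j) = (\<lambda>K. c * form2 B K)"
  unfolding form2_def by auto

lemma form2_indicator:
  assumes "1 \<le> a" "a < b" "b \<le> 7"
  shows "form2 (\<lambda>i j. if i = a \<and> j = b then 1 else 0) = basis_form {a, b}"
proof
  fix I :: "nat set"
  have "card I = 2 \<and> I \<subseteq> {1..7} \<and> Min I = a \<and> Max I = b \<longleftrightarrow> I = {a, b}"
    using assms card_2_eq_Min_Max[of I] by auto
  then show "form2 (\<lambda>i j. if i = a \<and> j = b then 1 else 0) I = basis_form {a, b} I"
    unfolding form2_def basis_form_def by auto
qed

lemma omega_std_eq_form2:
  "omega_std = form2 (\<lambda>i j. (if i = 2 \<and> j = 5 then 1 else 0) + (if i = 3 \<and> j = 6 then 1 else 0)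
     + (if i = 4 \<and> j = 7 then 1 else 0))"
  by (simp add: omega_std_def form2_add form2_indicator)

lemma self_dual_form_eq_form2:
  assumes "1 \<le> a" "a < b" "b \<le> 4"
  shows "(\<lambda>K. k * self_dual_form a b K) =
    form2 (\<lambda>i j. k * ((if i = a \<and> j = b then 1 else 0) + (if i = a + 3 \<and> j = b + 3 then 1 else 0)))"
  using assms by (simp add: self_dual_form_def form2_scale form2_add form2_indicator)

lemma Qform_msub: "Qform (msub A B) C = Qform A C - Qform B C"
  unfolding Qform_def msub_def by (simp add: algebra_simps sum_subtractf)

lemma Qform_madd: "Qform (madd A B) C = Qform A C + Qform B C"
  unfolding Qform_def madd_def by (simp add: algebra_simps sum.distrib)

lemma Qform_mscale: "Qform (mscale s A) C = s * Qform A C"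
  unfolding Qform_def mscale_def by (simp add: algebra_simps sum_distrib_left)

lemma brk_mscale: "brk (mscale a A) (mscale b B) = mscale (a * b) (brk A B)"
  unfolding brk_def mscale_def msub_def mmult_def
  by (intro ext) (simp add: sum_distrib_left algebra_simps)

lemma brk_zero: "brk (\<lambda>a b. 0) (\<lambda>a b. 0) = (\<lambda>a b. 0)"
  unfolding brk_def msub_def mmult_def by simp

lemmas matrix_simps = Qform_def atLeastAtMost_Suc_0_5 ebasis_def msub_def Emat_def brk_def mmult_def

lemma Qform_ebasis_isotropy_orthonormal:
  "\<forall>c\<in>{8, 9, 10}. \<forall>d\<in>{8, 9, 10}. Qform (ebasis d) (ebasis c) = (if c = d then 1 else 0)"
  by (simp add: matrix_simps)

lemma edual_isotropy_ebasis_m: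
  "\<forall>c\<in>{8, 9, 10}. \<forall>i\<in>{1..7}. edual c (ebasis i) = 0"
  by (simp add: edual_def atLeastAtMost_Suc_0_7 matrix_simps)

lemma edual_brk_ebasis:
  "\<forall>i\<in>{1..7}. \<forall>j\<in>{1..7}. i < j \<longrightarrow>
     edual 1 (brk (ebasis i) (ebasis j)) =
       - ((if i = 2 \<and> j = 5 then 1 else 0) + (if i = 3 \<and> j = 6 then 1 else 0) + (if i = 4 \<and> j = 7 then 1 else 0))"
  "\<forall>i\<in>{1..7}. \<forall>j\<in>{1..7}. i < j \<longrightarrow>
     edual 8 (brk (ebasis i) (ebasis j)) = - ((if i = 2 \<and> j = 3 then 1 else 0) + (if i = 5 \<and> j = 6 then 1 else 0))"
  "\<forall>i\<in>{1..7}. \<forall>j\<in>{1..7}. i < j \<longrightarrow>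
     edual 9 (brk (ebasis i) (ebasis j)) = - ((if i = 2 \<and> j = 4 then 1 else 0) + (if i = 5 \<and> j = 7 then 1 else 0))"
  "\<forall>i\<in>{1..7}. \<forall>j\<in>{1..7}. i < j \<longrightarrow>
     edual 10 (brk (ebasis i) (ebasis j)) = (if i = 3 \<and> j = 4 then 1 else 0) + (if i = 6 \<and> j = 7 then 1 else 0)"
  by (simp_all add: edual_def atLeastAtMost_Suc_0_7 matrix_simps)

lemma alpha_Xb:
  assumes "i \<in> {1..7}"
  shows "alpha (Xb y1 y2 y3 i) = (\<lambda>a b. 0)"
proof -
  have "edual c (Xb y1 y2 y3 i) = 0" if "c \<in> {8, 9, 10}" for c
    using edual_isotropy_ebasis_m[rule_format, OF that assms] unfolding Xb_def edual_def
    by (simp add: Qform_mscale)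
  then show ?thesis unfolding alpha_def by (simp add: madd_def mscale_def)
qed

lemma edual_alpha:
  assumes "c \<in> {8, 9, 10}"
  shows "edual c (alpha A) = edual c A"
  using assms Qform_ebasis_isotropy_orthonormal unfolding alpha_def edual_def
  by (auto simp: Qform_madd Qform_mscale)

lemma edual_curv_Xb:
  assumes "c \<in> {8, 9, 10}" "i \<in> {1..7}" "j \<in> {1..7}"
  shows "edual c (curv (Xb y1 y2 y3 i) (Xb y1 y2 y3 j)) =
    - (1 / sqrt (yval y1 y2 y3 i) * (1 / sqrt (yval y1 y2 y3 j))) * edual c (brk (ebasis i) (ebasis j))"
proof -
  have "edual c (curv (Xb y1 y2 y3 i) (Xb y1 y2 y3 j)) = - edual c (alpha (brk (Xb y1 y2 y3 i) (Xb y1 y2 y3 j)))"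
    unfolding curv_def alpha_Xb[OF assms(2)] alpha_Xb[OF assms(3)] brk_zero
    unfolding edual_def Qform_msub by (simp add: Qform_def)
  also have "\<dots> = - edual c (brk (Xb y1 y2 y3 i) (Xb y1 y2 y3 j))"
    using edual_alpha[OF assms(1)] by simp
  also have "\<dots> = - (1 / sqrt (yval y1 y2 y3 i) * (1 / sqrt (yval y1 y2 y3 j))) * edual c (brk (ebasis i) (ebasis j))"
    unfolding Xb_def brk_mscale edual_def Qform_mscale by simp
  finally show ?thesis .
qed

lemma inv_sqrt_yval_product:
  assumes "y2 > 0" "y3 = y2" "i \<in> {2..7}" "j \<in> {2..7}"
  shows "1 / sqrt (yval y1 y2 y3 i) * (1 / sqrt (yval y1 y2 y3 j)) = 1 / y2"
  using assms by (simp add: yval_def divide_simps)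

lemma Fcomp_eq_self_dual_form:
  assumes "y2 > 0" "y3 = y2"
  shows "Fcomp y1 y2 y3 8 = (\<lambda>K. (1 / y2) * self_dual_form 2 3 K)"
    and "Fcomp y1 y2 y3 9 = (\<lambda>K. (1 / y2) * self_dual_form 2 4 K)"
    and "Fcomp y1 y2 y3 10 = (\<lambda>K. (- 1 / y2) * self_dual_form 3 4 K)"
proof -
  have Fcomp_form2: "Fcomp y1 y2 y3 c = form2 (\<lambda>i j.
      - (1 / sqrt (yval y1 y2 y3 i) * (1 / sqrt (yval y1 y2 y3 j))) * edual c (brk (ebasis i) (ebasis j)))"
    if "c \<in> {8, 9, 10}" for c
    unfolding Fcomp_def by (rule form2_cong) (use edual_curv_Xb that in auto)
  \<comment> \<open>Pairs involving \<open>X\<^sub>1\<close> drop out: \<open>[e\<^sub>1, e\<^sub>j]\<close> has no \<open>\<mathfrak>so(3)\<close> component.\<close>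
  note scale = inv_sqrt_yval_product[OF assms]
  show "Fcomp y1 y2 y3 8 = (\<lambda>K. (1 / y2) * self_dual_form 2 3 K)"
    unfolding Fcomp_form2[of 8, simplified] self_dual_form_eq_form2[of 2 3, simplified]
    by (rule form2_cong) (use edual_brk_ebasis(2) scale in auto)
  show "Fcomp y1 y2 y3 9 = (\<lambda>K. (1 / y2) * self_dual_form 2 4 K)"
    unfolding Fcomp_form2[of 9, simplified] self_dual_form_eq_form2[of 2 4, simplified]
    by (rule form2_cong) (use edual_brk_ebasis(3) scale in auto)
  show "Fcomp y1 y2 y3 10 = (\<lambda>K. (- 1 / y2) * self_dual_form 3 4 K)"
    unfolding Fcomp_form2[of 10, simplified] self_dual_form_eq_form2[of 3 4, simplified]
    by (rule form2_cong) (use edual_brk_ebasis(4) scale in auto)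
qed

lemma omega_eq_omega_std:
  assumes "y2 > 0" "y3 = y2" "y1 = 4 * y2 ^ 2"
  shows "omega y1 y2 y3 = omega_std"
  unfolding omega_def omega_std_eq_form2
proof (rule form2_cong)
  fix i j :: nat
  assume ij: "i \<in> {1..7}" "j \<in> {1..7}" "i < j"
  have "sqrt y1 = 2 * y2"
    using assms by (simp add: real_sqrt_mult)
  moreover have "eta_fun y1 (brk (Xb y1 y2 y3 i) (Xb y1 y2 y3 j)) =
      sqrt y1 * (1 / sqrt (yval y1 y2 y3 i) * (1 / sqrt (yval y1 y2 y3 j))) * edual 1 (brk (ebasis i) (ebasis j))"
    unfolding eta_fun_def Xb_def brk_mscale edual_def Qform_mscale by simp
  ultimately show "- (1 / 2) * eta_fun y1 (brk (Xb y1 y2 y3 i) (Xb y1 y2 y3 j)) =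
      (if i = 2 \<and> j = 5 then 1 else 0) + (if i = 3 \<and> j = 6 then 1 else 0) + (if i = 4 \<and> j = 7 then 1 else 0)"
    using edual_brk_ebasis(1) inv_sqrt_yval_product[OF assms(1,2)] ij assms(1) by auto
qed

theorem corollary4p7:
  fixes y1 y2 y3 :: real
  assumes "y2 > 0" and "y3 = y2" and "y1 = 4 * y2 ^ 2"
  shows "\<forall>c\<in>{8, 9, 10::nat}.
           hodge (wedge (wedge (Fcomp y1 y2 y3 c) eta) (omega y1 y2 y3)) = Fcomp y1 y2 y3 c"
  unfolding ball_simps Fcomp_eq_self_dual_form[OF assms(1,2)] omega_eq_omega_std[OF assms]
  by (intro conjI TrueI self_dual_form_self_dual) auto

end
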